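(* Let $A$ be a ring, $\varpi\in A$ a non-zero-divisor, and $H\in A$ an element whose image in $A/\varpi$ is a non-zero-divisor. Endow $A$ with the $\varpi$-adic topology and let $A\langle X\rangle$ be the ring of restricted power series. Then the map $$\varphi:A\langle X\rangle/(XH-\varpi)\to A\langle X\rangle/(XH-1),\qquad X\mapsto\varpi X,$$ is injective.
   Context: $A\langle X\rangle=\{\sum_{n\ge0}a_nX^n: a_n\in A,\ \text{for every }k\text{ one has }a_n\in\varpi^kA\text{ for all sufficiently large }n\}$. *)

theory Defs
  imports "HOL-Computational_Algebra.Formal_Power_Series"
begin

definition restricted :: "'a::comm_ring_1 \<Rightarrow> 'a fps \<Rightarrow> bool" where
  "restricted w f \<longleftrightarrow> (\<forall>k. \<forall>\<^sub>F n in sequentially. w ^ k dvd fps_nth f n)"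

definition in_restricted_ideal :: "'a::comm_ring_1 \<Rightarrow> 'a fps \<Rightarrow> 'a fps \<Rightarrow> bool" where
  "in_restricted_ideal w g f \<longleftrightarrow> (\<exists>q. restricted w q \<and> f = g * q)"

definition subst_scale :: "'a::comm_ring_1 \<Rightarrow> 'a fps \<Rightarrow> 'a fps" where
  "subst_scale w f = Abs_fps (\<lambda>n. w ^ n * fps_nth f n)"

end

theory Submission
  imports Defs
begin

text \<open>Write phi for \<open>subst_scale w\<close>; it is an injective ring endomorphism with
  phi(XH - w) = w (XH - 1). Suppose phi(f) = (XH - 1) q with q restricted. Comparing coefficients
  gives H q_j = q_(j+1) mod w^(j+1), and as H is a non-zero-divisor modulo w, divisibility of
  q_(j+1) by w^(m+1) descends to q_j whenever m \<le> j. Since q_n is divisible by w^(m+1) for all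
  large n, induction on m gives w^(j+1) | q_j, i.e. q = w phi(g). Then phi(f) = phi((XH - w) g),
  so f = (XH - w) g, and the same descent shows that g is restricted.\<close>

unbundle fps_syntax

lemma power_mult_eq_0_nzd:
  fixes w :: "'a::comm_ring_1"
  assumes "\<forall>a. w * a = 0 \<longrightarrow> a = 0" and "w ^ k * a = 0"
  shows "a = 0"
  using assms(2)
proof (induction k arbitrary: a)
  case (Suc k)
  then have "w * (w ^ k * a) = 0" by (simp add: mult.assoc)
  then show ?case using assms(1) Suc.IH by blast
qed simp

lemma dvd_mult_cancel_nzd:
  fixes c :: "'a::comm_ring_1"
  assumes c_nzd: "\<forall>a. c * a = 0 \<longrightarrow> a = 0" and "c * b dvd c * x"
  shows "b dvd x"
proof -
  obtain t where "c * x = c * b * t" using assms(2) unfolding dvd_def by blast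
  then have "c * (x - b * t) = 0" by (simp add: algebra_simps)
  then have "x = b * t" using c_nzd by (metis eq_iff_diff_eq_0)
  then show ?thesis by simp
qed

lemma power_Suc_dvd_of_dvd_mult:
  fixes w H :: "'a::comm_ring_1"
  assumes w_nzd: "\<forall>a. w * a = 0 \<longrightarrow> a = 0"
    and H_nzd_mod_w: "\<forall>a. w dvd H * a \<longrightarrow> w dvd a"
    and "w ^ m dvd a" and "w ^ Suc m dvd H * a"
  shows "w ^ Suc m dvd a"
proof -
  obtain r where r: "a = w ^ m * r" using assms(3) unfolding dvd_def by blast
  have "w ^ m * w dvd w ^ m * (H * r)"
    using assms(4) by (simp add: r algebra_simps)
  then have "w dvd H * r"
    using dvd_mult_cancel_nzd power_mult_eq_0_nzd[OF w_nzd] by blast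
  then have "w dvd r" using H_nzd_mod_w by blast
  then show ?thesis by (simp add: r mult_dvd_mono mult.commute)
qed

lemma fps_nth_linear_mult_Suc:
  fixes H c :: "'a::comm_ring_1"
  shows "((fps_X * fps_const H - fps_const c) * q) $ Suc n = H * q $ n - c * q $ Suc n"
proof -
  have "(fps_X * fps_const H - fps_const c) * q = fps_X * (fps_const H * q) - fps_const c * q"
    by (simp add: algebra_simps)
  then show ?thesis by simp
qed

lemma subst_scale_mult: "subst_scale w (f * g) = subst_scale w f * subst_scale w g"
proof (rule fps_ext)
  fix n
  have "w ^ n * (f * g) $ n = (\<Sum>i=0..n. w ^ i * f $ i * (w ^ (n - i) * g $ (n - i)))"
    unfolding fps_mult_nth sum_distrib_left
  proof (rule sum.cong)
    fix i assume "i \<in> {0..n}"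
    then have "w ^ n = w ^ i * w ^ (n - i)" by (simp flip: power_add)
    then show "w ^ n * (f $ i * g $ (n - i)) = w ^ i * f $ i * (w ^ (n - i) * g $ (n - i))"
      by (simp add: ac_simps)
  qed simp
  then show "subst_scale w (f * g) $ n = (subst_scale w f * subst_scale w g) $ n"
    by (simp add: subst_scale_def fps_mult_nth)
qed

lemma subst_scale_linear:
  "subst_scale w (fps_X * fps_const H - fps_const w) = fps_const w * (fps_X * fps_const H - 1)"
  by (rule fps_ext) (simp add: subst_scale_def algebra_simps)

lemma subst_scale_inj:
  fixes w :: "'a::comm_ring_1"
  assumes w_nzd: "\<forall>a. w * a = 0 \<longrightarrow> a = 0" and "subst_scale w f = subst_scale w g"
  shows "f = g"
proof (rule fps_ext)
  fix n
  have "w ^ n * (f $ n - g $ n) = 0"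
    using arg_cong[OF assms(2), of "\<lambda>p. p $ n"] by (simp add: subst_scale_def algebra_simps)
  then show "f $ n = g $ n" using power_mult_eq_0_nzd[OF w_nzd] by (metis eq_iff_diff_eq_0)
qed

lemma power_Suc_dvd_nth_of_congruence:
  fixes w H :: "'a::comm_ring_1"
  assumes w_nzd: "\<forall>a. w * a = 0 \<longrightarrow> a = 0"
    and H_nzd_mod_w: "\<forall>a. w dvd H * a \<longrightarrow> w dvd a"
    and "restricted w q"
    and cong: "\<And>j. w ^ Suc j dvd H * q $ j - q $ Suc j"
  shows "w ^ Suc j dvd q $ j"
proof -
  have "\<forall>j. m \<le> Suc j \<longrightarrow> w ^ m dvd q $ j" for m
  proof (induction m)
    case (Suc m)
    show ?case
    proof (intro allI impI)
      fix j assume "Suc m \<le> Suc j"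
      obtain N where N: "\<And>n. N \<le> n \<Longrightarrow> w ^ Suc m dvd q $ n"
        using \<open>restricted w q\<close> unfolding restricted_def eventually_sequentially by blast
      show "w ^ Suc m dvd q $ j"
      proof (rule inc_induct[of j "max j N"])
        fix n assume "j \<le> n" and step: "w ^ Suc m dvd q $ Suc n"
        have "w ^ Suc m dvd w ^ Suc n"
          using \<open>Suc m \<le> Suc j\<close> \<open>j \<le> n\<close> by (intro le_imp_power_dvd) simp
        then have "w ^ Suc m dvd H * q $ n - q $ Suc n"
          using cong dvd_trans by blast
        then have "w ^ Suc m dvd H * q $ n"
          using step by (metis diff_add_cancel dvd_add)
        moreover have "w ^ m dvd q $ n"
          using Suc.IH \<open>Suc m \<le> Suc j\<close> \<open>j \<le> n\<close> by simp
        ultimately show "w ^ Suc m dvd q $ n"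
          by (rule power_Suc_dvd_of_dvd_mult[OF w_nzd H_nzd_mod_w, rotated])
      qed (use N in auto)
    qed
  qed simp
  then show ?thesis by blast
qed

lemma restricted_cofactor:
  fixes w H :: "'a::comm_ring_1"
  assumes w_nzd: "\<forall>a. w * a = 0 \<longrightarrow> a = 0"
    and H_nzd_mod_w: "\<forall>a. w dvd H * a \<longrightarrow> w dvd a"
    and "restricted w ((fps_X * fps_const H - fps_const w) * g)"
  shows "restricted w g"
  unfolding restricted_def
proof
  fix k show "\<forall>\<^sub>F n in sequentially. w ^ k dvd g $ n"
  proof (induction k)
    case (Suc k)
    obtain N where N: "\<And>n. N \<le> n \<Longrightarrow> w ^ k dvd g $ n"
      using Suc.IH unfolding eventually_sequentially by blast
    obtain M where M: "\<And>n. M \<le> n \<Longrightarrow>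
        w ^ Suc k dvd ((fps_X * fps_const H - fps_const w) * g) $ n"
      using assms(3) unfolding restricted_def eventually_sequentially by blast
    show ?case unfolding eventually_sequentially
    proof (intro exI allI impI)
      fix n assume "N + M \<le> n"
      then have "w ^ Suc k dvd H * g $ n - w * g $ Suc n"
        using M[of "Suc n"] by (simp only: fps_nth_linear_mult_Suc)
      moreover have "w ^ Suc k dvd w * g $ Suc n"
        unfolding power_Suc using N[of "Suc n"] \<open>N + M \<le> n\<close> by (intro mult_dvd_mono) auto
      ultimately have "w ^ Suc k dvd H * g $ n"
        by (metis diff_add_cancel dvd_add)
      moreover have "w ^ k dvd g $ n"
        using N \<open>N + M \<le> n\<close> by simp
      ultimately show "w ^ Suc k dvd g $ n"
        by (rule power_Suc_dvd_of_dvd_mult[OF w_nzd H_nzd_mod_w, rotated])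
    qed
  qed simp
qed

theorem mainTheorem17:
  fixes w H :: "'a::comm_ring_1"
  assumes w_nzd: "\<forall>a. w * a = 0 \<longrightarrow> a = 0"
    and H_nzd_mod_w: "\<forall>a. w dvd H * a \<longrightarrow> w dvd a"
  shows "\<forall>f. restricted w f \<longrightarrow>
           in_restricted_ideal w (fps_X * fps_const H - 1) (subst_scale w f) \<longrightarrow>
           in_restricted_ideal w (fps_X * fps_const H - fps_const w) f"
proof (intro allI impI)
  fix f assume "restricted w f"
    and "in_restricted_ideal w (fps_X * fps_const H - 1) (subst_scale w f)"
  then obtain q where "restricted w q" and fq: "subst_scale w f = (fps_X * fps_const H - 1) * q"
    unfolding in_restricted_ideal_def by blast
  have "w ^ Suc j * f $ Suc j = H * q $ j - q $ Suc j" for j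
    using arg_cong[OF fq, of "\<lambda>p. p $ Suc j"]
    by (simp add: subst_scale_def fps_nth_linear_mult_Suc[where c = 1, simplified])
  then have "w ^ Suc j dvd H * q $ j - q $ Suc j" for j
    by (metis dvd_triv_left)
  then have "\<forall>j. \<exists>r. q $ j = w ^ Suc j * r"
    using power_Suc_dvd_nth_of_congruence[OF w_nzd H_nzd_mod_w \<open>restricted w q\<close>]
    unfolding dvd_def by blast
  then obtain g where "\<And>j. q $ j = w ^ Suc j * g j" by metis
  then have "q = fps_const w * subst_scale w (Abs_fps g)"
    by (intro fps_ext) (simp add: subst_scale_def)
  then have "subst_scale w f = subst_scale w ((fps_X * fps_const H - fps_const w) * Abs_fps g)"
    by (simp add: fq subst_scale_mult subst_scale_linear ac_simps)
  then have f: "f = (fps_X * fps_const H - fps_const w) * Abs_fps g"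
    using subst_scale_inj[OF w_nzd] by blast
  then have "restricted w (Abs_fps g)"
    using restricted_cofactor[OF w_nzd H_nzd_mod_w] \<open>restricted w f\<close> by blast
  then show "in_restricted_ideal w (fps_X * fps_const H - fps_const w) f"
    unfolding in_restricted_ideal_def using f by blast
qed

end
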